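(* Let $Q(x,y)=Q(q,\nu,t,1,1;x,y)$, $Q_1(x)=[y^1]Q(x,y)$, and define $$K(x,y)=1-xt-\frac ty-\frac{yt(\nu-1)}{(1-x\nu t)x}-\frac{ty^2(\nu-1+q-x\nu qt)Q(0,y)}{1-x\nu t}-\frac{y(\nu+x\nu t-1)Q_1(x)}{\nu}$$ (this is the coefficient of $Q(x,y)$ when the functional equation for $Q$ is written as $K(x,y)Q(x,y)=R(x,y)$). Set $x=ts$ with $s$ an indeterminate. Then, as a function of $y$, $K(ts,y)$ has exactly two roots $Y_1,Y_2$ in $\mathbb{Q}(q,\nu,s)[[t]]$, with constant terms $0$ and $\frac{s}{\nu-1}$ respectively; both actually belong to $\mathbb{Q}(\nu)[q,s,1/s][[t]]$.
   Context: Planar maps are connected planar graphs properly embedded in the oriented sphere up to orientation-preserving homeomorphism (loops and multiple edges allowed), rooted by a distinguished corner whose vertex/face are the root-vertex/root-face (other faces are internal); degrees count edges with multiplicity; the atomic map is included; $e,v,f$ count edges, vertices, faces; $d_f$ is the root-face degree. The Potts polynomial is $P_G(q,\nu)=\sum_{c:V(G)\to\{1,\dots,q\}}\nu^{m(c)}$, $m(c)$ = number of monochromatic edges (loops always monochromatic), viewed as a polynomial in $q,\nu$. A quasi-triangulation is a rooted planar map whose internal faces are digons incident to the root-vertex or triangles; $\mathrm{dig}(Q)$ = number of internal digons, $\mathrm{ddig}(Q)$ = number of internal digons doubly incident to the root-vertex. $Q(q,\nu,t,w,z;x,y)=\frac1q\sum_Q t^{e(Q)}w^{v(Q)-1}z^{f(Q)-1}x^{\mathrm{dig}(Q)}y^{d_f(Q)}2^{\mathrm{ddig}(Q)}P_Q(q,\nu)$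 over all quasi-triangulations. *)

theory Defs
  imports "HOL-Computational_Algebra.Computational_Algebra"
          "HOL-Combinatorics.Permutations" "HOL-Library.FuncSet"
begin

text \<open>F = Q(q,nu,s), realised as the fraction field of Q[q][nu][s]
  (innermost polynomial variable q, middle nu, outermost s).\<close>

type_synonym F = "rat poly poly poly fract"

definition varq :: F where "varq = Fract [:[:[:0,1:]:]:] 1"
definition varnu :: F where "varnu = Fract [:([:0,1:] :: rat poly poly):] 1"
definition vars :: F where "vars = Fract ([:0,1:] :: rat poly poly poly) 1"

text \<open>The subring Q(nu)[q,s,1/s] of F: elements p(q,nu,s) / (d(nu) s^N), d nonzero.\<close>
definition in_Qnu_q_s_sinv :: "F \<Rightarrow> bool" where
  "in_Qnu_q_s_sinv a \<longleftrightarrow> (\<exists>(p :: rat poly poly poly) (d :: rat poly) (N :: nat).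
      d \<noteq> 0 \<and> a * Fract [:map_poly (\<lambda>c. [:c:]) d:] 1 * vars ^ N = Fract p 1)"

definition potts_eval :: "'v set \<Rightarrow> 'e set \<Rightarrow> ('e \<Rightarrow> 'v \<times> 'v) \<Rightarrow> nat \<Rightarrow> rat \<Rightarrow> rat" where
  "potts_eval V E ends k v =
     (\<Sum>c \<in> V \<rightarrow>\<^sub>E {1..k}. v ^ card {e \<in> E. c (fst (ends e)) = c (snd (ends e))})"

text \<open>Evaluation of p in Q[q][nu] (outer variable nu, inner q) at q = a, nu = b.\<close>
definition eval_qnu :: "rat poly poly \<Rightarrow> rat \<Rightarrow> rat \<Rightarrow> rat" where
  "eval_qnu p a b = poly (map_poly (\<lambda>c. poly c a) p) b"

definition potts_poly :: "'v set \<Rightarrow> 'e set \<Rightarrow> ('e \<Rightarrow> 'v \<times> 'v) \<Rightarrow> rat poly poly" where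
  "potts_poly V E ends =
     (THE p. \<forall>k::nat. k \<ge> 1 \<longrightarrow> (\<forall>v. eval_qnu p (of_nat k) v = potts_eval V E ends k v))"

text \<open>A map with n \<ge> 1 edges on the darts {..<2n}: sigma = vertex rotation,
  alpha = fixed-point-free involution (edges); faces are the cycles of sigma o alpha.
  The root corner is the corner (inv sigma 0, 0): root vertex = sigma-cycle of 0,
  root face = (sigma o alpha)-cycle of 0.\<close>

definition cyc :: "(nat \<Rightarrow> nat) \<Rightarrow> nat \<Rightarrow> nat set" where
  "cyc f d = range (\<lambda>k. (f ^^ k) d)"

definition darts :: "nat \<Rightarrow> nat set" where "darts n = {..<2*n}"

definition map_vertices :: "nat \<Rightarrow> (nat \<Rightarrow> nat) \<Rightarrow> nat set set" where
  "map_vertices n \<sigma> = cyc \<sigma> ` darts n"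

definition map_faces :: "nat \<Rightarrow> (nat \<Rightarrow> nat) \<Rightarrow> (nat \<Rightarrow> nat) \<Rightarrow> nat set set" where
  "map_faces n \<sigma> \<alpha> = cyc (\<sigma> \<circ> \<alpha>) ` darts n"

definition root_vertex :: "(nat \<Rightarrow> nat) \<Rightarrow> nat set" where
  "root_vertex \<sigma> = cyc \<sigma> 0"

definition root_face :: "(nat \<Rightarrow> nat) \<Rightarrow> (nat \<Rightarrow> nat) \<Rightarrow> nat set" where
  "root_face \<sigma> \<alpha> = cyc (\<sigma> \<circ> \<alpha>) 0"

definition internal_faces :: "nat \<Rightarrow> (nat \<Rightarrow> nat) \<Rightarrow> (nat \<Rightarrow> nat) \<Rightarrow> nat set set" where
  "internal_faces n \<sigma> \<alpha> = map_faces n \<sigma> \<alpha> - {root_face \<sigma> \<alpha>}"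

definition is_planar_map :: "nat \<Rightarrow> (nat \<Rightarrow> nat) \<Rightarrow> (nat \<Rightarrow> nat) \<Rightarrow> bool" where
  "is_planar_map n \<sigma> \<alpha> \<longleftrightarrow>
     \<sigma> permutes darts n \<and> \<alpha> permutes darts n \<and>
     (\<forall>d \<in> darts n. \<alpha> d \<noteq> d \<and> \<alpha> (\<alpha> d) = d) \<and>
     (\<forall>d \<in> darts n. (0, d) \<in> ({(a, \<sigma> a) | a. a \<in> darts n} \<union> {(a, \<alpha> a) | a. a \<in> darts n})\<^sup>*) \<and>
     card (map_vertices n \<sigma>) + card (map_faces n \<sigma> \<alpha>) = n + 2"

definition is_quasi_tri :: "nat \<Rightarrow> (nat \<Rightarrow> nat) \<Rightarrow> (nat \<Rightarrow> nat) \<Rightarrow> bool" where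
  "is_quasi_tri n \<sigma> \<alpha> \<longleftrightarrow> is_planar_map n \<sigma> \<alpha> \<and>
     (\<forall>f \<in> internal_faces n \<sigma> \<alpha>.
        card f = 3 \<or> (card f = 2 \<and> f \<inter> root_vertex \<sigma> \<noteq> {}))"

definition n_dig :: "nat \<Rightarrow> (nat \<Rightarrow> nat) \<Rightarrow> (nat \<Rightarrow> nat) \<Rightarrow> nat" where
  "n_dig n \<sigma> \<alpha> = card {f \<in> internal_faces n \<sigma> \<alpha>. card f = 2}"

definition n_ddig :: "nat \<Rightarrow> (nat \<Rightarrow> nat) \<Rightarrow> (nat \<Rightarrow> nat) \<Rightarrow> nat" where
  "n_ddig n \<sigma> \<alpha> = card {f \<in> internal_faces n \<sigma> \<alpha>. card f = 2 \<and> f \<subseteq> root_vertex \<sigma>}"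

definition map_potts :: "nat \<Rightarrow> (nat \<Rightarrow> nat) \<Rightarrow> (nat \<Rightarrow> nat) \<Rightarrow> rat poly poly" where
  "map_potts n \<sigma> \<alpha> = potts_poly (map_vertices n \<sigma>) {d \<in> darts n. d < \<alpha> d}
                                  (\<lambda>d. (cyc \<sigma> d, cyc \<sigma> (\<alpha> d)))"

text \<open>Coefficient of t^n of Q, a polynomial in y (outer) and x (inner) over F.
  Rooted maps with n \<ge> 1 edges are counted as labelled maps on {..<2n} with
  root dart 0, divided by (2n-1)! (each rooted map has exactly (2n-1)! such labellings).
  The only map with 0 edges is the atomic map, contributing (1/q) * q = 1.\<close>
definition Q_coeff :: "nat \<Rightarrow> F poly poly" where
  "Q_coeff n = (if n = 0 then 1 else
     (\<Sum>(\<sigma>, \<alpha>) \<in> {(\<sigma>, \<alpha>). is_quasi_tri n \<sigma> \<alpha>}.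
        monom (monom (1 / (of_nat (fact (2*n - 1)) * varq) * 2 ^ n_ddig n \<sigma> \<alpha>
                       * Fract [:map_potts n \<sigma> \<alpha>:] 1)
                     (n_dig n \<sigma> \<alpha>))
              (card (root_face \<sigma> \<alpha>))))"

definition Qser :: "F poly poly fps" where "Qser = Abs_fps Q_coeff"

definition Q0y :: "F poly fps" where
  "Q0y = Abs_fps (\<lambda>n. map_poly (\<lambda>p. poly p 0) (fps_nth Qser n))"

definition Q1x :: "F poly fps" where
  "Q1x = Abs_fps (\<lambda>n. coeff (fps_nth Qser n) 1)"

text \<open>Substitution of a power series Y for the polynomial variable of a series
  sum_n t^n p_n(z) with polynomial coefficients: sum_n t^n p_n(Y).\<close>
definition psubst :: "'a::comm_ring_1 poly fps \<Rightarrow> 'a fps \<Rightarrow> 'a fps" where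
  "psubst A Y = Abs_fps (\<lambda>m. \<Sum>n\<le>m. fps_nth (fps_X ^ n * poly (map_poly fps_const (fps_nth A n)) Y) m)"

definition K_ts :: "F fps \<Rightarrow> F fls" where
  "K_ts Y = (let t = fls_X; x = fls_const vars * fls_X; y = fps_to_fls Y;
                 q = fls_const varq; \<nu> = fls_const varnu;
                 Q0 = fps_to_fls (psubst Q0y Y);
                 Q1 = fps_to_fls (psubst Q1x (fps_const vars * fps_X))
             in 1 - x * t - t / y - y * t * (\<nu> - 1) / ((1 - x * \<nu> * t) * x)
                - t * y^2 * (\<nu> - 1 + q - x * \<nu> * q * t) * Q0 / (1 - x * \<nu> * t)
                - y * (\<nu> + x * \<nu> * t - 1) * Q1 / \<nu>)"

end

theory Submission
  imports Defs
begin

(* Multiplying K(ts,y) by y(1 - x nu t) (x = ts) clears all denominators and gives a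
   power series expression G(y) in t, so the roots of K are exactly the nonzero power
   series roots of G.  The equation G(Y) = 0 is triangular: its constant term reads
   Y0 - a Y0^2 = 0 with a = (nu-1)/s, and for m >= 1 the coefficient [t^m] G(Y) depends
   only on Y0,...,Ym and is affine in Ym with slope 1 - 2 a Y0.  For the two roots
   Y0 = 0 and Y0 = s/(nu-1) the slope is 1 resp. -1, so a Hensel-type argument, developed
   abstractly for causal maps on power series, yields exactly one solution for each, and
   its coefficients stay in every subring containing the coefficients of G.  That the
   ring Q(nu)[q,s,1/s] contains them rests on the fact that the Potts polynomial of a
   nonempty graph is divisible by q (via the Fortuin-Kasteleyn expansion), which cancels
   the factor 1/q in the definition of Q. *)

lemma vars_nz: "vars \<noteq> 0" by (simp add: vars_def Zero_fract_def eq_fract)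
lemma varnu_nz: "varnu \<noteq> 0" by (simp add: varnu_def Zero_fract_def eq_fract)
lemma varq_nz: "varq \<noteq> 0" by (simp add: varq_def Zero_fract_def eq_fract)
lemma varnu_ne1: "varnu \<noteq> 1" by (simp add: varnu_def One_fract_def eq_fract one_pCons)

lemma Fract_eq_0_iff: "Fract (a::'a::idom) 1 = 0 \<longleftrightarrow> a = 0"
  using eq_fract(1)[of 1 1 a 0] by (simp add: fract_collapse)

lemma map_poly_add_hom:
  assumes "f 0 = 0" "\<And>x y. f (x + y) = f x + f y"
  shows "map_poly f (p + q) = map_poly f p + map_poly f q"
  by (intro poly_eqI) (simp add: coeff_map_poly assms)

lemma map_poly_mult_hom:
  fixes f :: "'a::comm_ring_1 \<Rightarrow> 'b::comm_ring_1"
  assumes f0: "f 0 = 0" and fadd: "\<And>x y. f (x + y) = f x + f y"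
    and fmult: "\<And>x y. f (x * y) = f x * f y"
  shows "map_poly f (p * q) = map_poly f p * map_poly f q"
proof (induction p)
  case (pCons a p)
  have "map_poly f (pCons a p * q) = map_poly f (smult a q + pCons 0 (p * q))" by simp
  also have "\<dots> = smult (f a) (map_poly f q) + pCons 0 (map_poly f p * map_poly f q)"
    by (simp add: map_poly_add_hom[OF f0 fadd] map_poly_smult[OF f0 fmult]
                  map_poly_pCons[of f, OF f0] f0 pCons.IH)
  also have "\<dots> = map_poly f (pCons a p) * map_poly f q" by (simp add: map_poly_pCons[of f, OF f0])
  finally show ?case .
qed simp

abbreviation R :: "F \<Rightarrow> bool" where "R \<equiv> in_Qnu_q_s_sinv"

definition emb :: "rat poly \<Rightarrow> F" where "emb d = Fract [:map_poly (\<lambda>c. [:c:]) d:] 1"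

lemma emb_mult: "emb (p * q) = emb p * emb q"
  by (simp add: emb_def map_poly_mult_hom ac_simps)

lemma emb_nz: "d \<noteq> 0 \<Longrightarrow> emb d \<noteq> 0"
  by (simp add: emb_def Fract_eq_0_iff map_poly_eq_0_iff)

lemma emb_const: "emb [:c:] = Fract [:[:[:c:]:]:] 1"
  by (simp add: emb_def map_poly_pCons)

lemma emb_1: "emb 1 = 1"
  using emb_const[of 1] by (simp add: fract_collapse one_pCons[symmetric])

lemma vars_power: "vars ^ N = Fract ([:0,1:] ^ N) 1"
  by (induction N) (simp_all add: vars_def fract_collapse)

lemma R_iff: "R a \<longleftrightarrow> (\<exists>p d N. d \<noteq> 0 \<and> a * emb d * vars ^ N = Fract p 1)"
  unfolding in_Qnu_q_s_sinv_def emb_def by simp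

lemma emb_vars_Fract: "\<exists>p. emb d * vars ^ N = Fract p 1"
  by (simp add: emb_def vars_power, blast)

lemma R_Fract: "R (Fract p 1)"
  unfolding R_iff by (intro exI[of _ p] exI[of _ 1] exI[of _ 0]) (simp add: emb_1)

lemma R_0: "R 0" using R_Fract[of 0] by (simp add: fract_collapse)
lemma R_1: "R 1" using R_Fract[of 1] by (simp add: fract_collapse)

lemma R_mult:
  assumes "R a" "R b" shows "R (a * b)"
proof -
  obtain p1 d1 N1 where 1: "d1 \<noteq> 0" "a * emb d1 * vars ^ N1 = Fract p1 1" using assms(1) R_iff by blast
  obtain p2 d2 N2 where 2: "d2 \<noteq> 0" "b * emb d2 * vars ^ N2 = Fract p2 1" using assms(2) R_iff by blast
  have "(a * b) * emb (d1 * d2) * vars ^ (N1 + N2) = (a * emb d1 * vars ^ N1) * (b * emb d2 * vars ^ N2)"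
    unfolding emb_mult power_add by (simp only: mult_ac)
  also have "\<dots> = Fract (p1 * p2) 1" using 1 2 by simp
  finally show ?thesis unfolding R_iff using 1 2 by (intro exI[of _ "p1 * p2"] exI[of _ "d1 * d2"]) auto
qed

lemma R_add:
  assumes "R a" "R b" shows "R (a + b)"
proof -
  obtain p1 d1 N1 where 1: "d1 \<noteq> 0" "a * emb d1 * vars ^ N1 = Fract p1 1" using assms(1) R_iff by blast
  obtain p2 d2 N2 where 2: "d2 \<noteq> 0" "b * emb d2 * vars ^ N2 = Fract p2 1" using assms(2) R_iff by blast
  obtain e1 where e1: "emb d1 * vars ^ N1 = Fract e1 1" using emb_vars_Fract by blast
  obtain e2 where e2: "emb d2 * vars ^ N2 = Fract e2 1" using emb_vars_Fract by blast
  have "(a + b) * emb (d1 * d2) * vars ^ (N1 + N2) =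
        (a * emb d1 * vars ^ N1) * (emb d2 * vars ^ N2) + (b * emb d2 * vars ^ N2) * (emb d1 * vars ^ N1)"
    unfolding emb_mult power_add by (simp add: algebra_simps)
  also have "\<dots> = Fract (p1 * e2 + p2 * e1) 1" using 1 2 e1 e2 by simp
  finally show ?thesis unfolding R_iff using 1 2
    by (intro exI[of _ "p1 * e2 + p2 * e1"] exI[of _ "d1 * d2"]) auto
qed

lemma R_uminus: "R a \<Longrightarrow> R (- a)"
proof -
  have "Fract (-1) 1 = - Fract 1 (1::rat poly poly poly)" by simp
  then have "Fract (-1) 1 = (-1::F)" by (simp add: fract_collapse)
  then show "R a \<Longrightarrow> R (- a)" using R_mult[OF R_Fract[of "-1"], of a] by simp
qed

lemma R_diff: "R a \<Longrightarrow> R b \<Longrightarrow> R (a - b)"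
  using R_add[of a "- b"] R_uminus[of b] by simp

lemma R_power: "R a \<Longrightarrow> R (a ^ n)"
  by (induction n) (auto intro: R_mult R_1)

lemma R_sum: "(\<And>x. x \<in> A \<Longrightarrow> R (f x)) \<Longrightarrow> R (sum f A)"
  by (induction A rule: infinite_finite_induct) (auto intro: R_0 R_add)

lemma R_divide: "R a \<Longrightarrow> R (1 / b) \<Longrightarrow> R (a / b)"
  using R_mult[of a "1/b"] by simp

lemma R_inv_emb: "d \<noteq> 0 \<Longrightarrow> R (1 / emb d)"
  unfolding R_iff using emb_nz
  by (intro exI[of _ 1] exI[of _ d] exI[of _ 0]) (simp add: fract_collapse)

lemma R_inv_vars: "R (1 / vars)"
  unfolding R_iff using vars_nz
  by (intro exI[of _ 1] exI[of _ 1] exI[of _ 1]) (simp add: fract_collapse emb_1)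

lemma R_inv_of_nat: "R (1 / of_nat n)"
proof (cases "n = 0")
  case False
  have "emb [:of_nat n:] = of_nat n"
    unfolding emb_const by (simp only: of_nat_poly[symmetric] Fract_of_nat_eq)
  then show ?thesis using R_inv_emb[of "[:of_nat n:]"] False by simp
qed (simp add: R_0)

lemma R_inv_nu: "R (1 / varnu)"
  using R_inv_emb[of "[:0,1:]"] by (simp add: emb_def map_poly_pCons varnu_def one_pCons[symmetric])

lemma R_inv_nu_minus_1: "R (1 / (varnu - 1))"
proof -
  have "emb [:-1,1:] = Fract [:[:0,1:]:] 1 - Fract 1 1"
    by (simp add: emb_def map_poly_pCons one_pCons)
  then show ?thesis using R_inv_emb[of "[:-1,1:]"] by (simp add: varnu_def fract_collapse)
qed

lemma R_of_nat: "R (of_nat n)" using R_Fract[of "of_nat n"] by (simp only: Fract_of_nat_eq)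
lemma R_vars: "R vars" by (simp add: vars_def R_Fract)
lemma R_varq: "R varq" by (simp add: varq_def R_Fract)
lemma R_varnu: "R varnu" by (simp add: varnu_def R_Fract)

definition R_fps :: "F fps \<Rightarrow> bool" where "R_fps Y \<longleftrightarrow> (\<forall>n. R (Y $ n))"

lemma R_fps_add: "R_fps A \<Longrightarrow> R_fps B \<Longrightarrow> R_fps (A + B)" by (simp add: R_fps_def R_add)
lemma R_fps_diff: "R_fps A \<Longrightarrow> R_fps B \<Longrightarrow> R_fps (A - B)" by (simp add: R_fps_def R_diff)
lemma R_fps_mult: "R_fps A \<Longrightarrow> R_fps B \<Longrightarrow> R_fps (A * B)"
  unfolding R_fps_def fps_mult_nth by (auto intro!: R_sum R_mult)
lemma R_fps_const: "R c \<Longrightarrow> R_fps (fps_const c)" by (simp add: R_fps_def R_0)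
lemma R_fps_1: "R_fps 1" by (simp add: R_fps_def R_0 R_1)
lemma R_fps_X: "R_fps fps_X" by (simp add: R_fps_def fps_X_def R_0 R_1)
lemma R_fps_power: "R_fps A \<Longrightarrow> R_fps (A ^ n)" by (induction n) (auto intro: R_fps_mult R_fps_1)

lemma R_fps_poly:
  "R_fps Y \<Longrightarrow> (\<And>k. R (coeff p k)) \<Longrightarrow> R_fps (poly (map_poly fps_const p) Y)"
proof (induction p)
  case (pCons a p)
  have "R a" "\<And>k. R (coeff p k)" using pCons.prems(2)[of 0] pCons.prems(2)[of "Suc _"] by simp_all
  then show ?case using pCons by (auto simp: map_poly_pCons intro!: R_fps_add R_fps_mult R_fps_const)
qed (simp add: R_fps_def R_0)

lemma R_fps_psubst:
  assumes "R_fps Y" "\<And>n k. R (coeff (A $ n) k)"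
  shows "R_fps (psubst A Y)"
  using R_fps_mult[OF R_fps_power[OF R_fps_X] R_fps_poly[OF assms]]
  unfolding R_fps_def psubst_def by (auto intro!: R_sum)


section \<open>Potts polynomials of nonempty graphs are divisible by q\<close>

definition eval_q :: "rat \<Rightarrow> rat poly poly \<Rightarrow> rat poly" where
  "eval_q a p = map_poly (\<lambda>c. poly c a) p"

lemma eval_q_0: "eval_q a 0 = 0" by (simp add: eval_q_def)
lemma eval_q_add: "eval_q a (p + q) = eval_q a p + eval_q a q"
  unfolding eval_q_def by (rule map_poly_add_hom) auto
lemma eval_q_mult: "eval_q a (p * q) = eval_q a p * eval_q a q"
  unfolding eval_q_def by (rule map_poly_mult_hom) auto
lemma eval_q_power: "eval_q a (p ^ n) = eval_q a p ^ n"
  by (induction n) (simp_all add: eval_q_mult eval_q_def[of a 1])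
lemma eval_q_sum: "eval_q a (sum g A) = (\<Sum>x\<in>A. eval_q a (g x))"
  by (induction A rule: infinite_finite_induct) (simp_all add: eval_q_add eval_q_0)
lemma eval_q_pCons: "eval_q a (pCons c p) = pCons (poly c a) (eval_q a p)"
  unfolding eval_q_def by (simp add: map_poly_pCons)
lemma eval_q_smult: "eval_q a (smult c p) = smult (poly c a) (eval_q a p)"
  using eval_q_mult[of a "[:c:]" p] by (simp add: eval_q_pCons eval_q_0)

lemma eval_qnu_unique:
  assumes "\<And>(k::nat) v. k \<ge> 1 \<Longrightarrow> eval_qnu p (of_nat k) v = eval_qnu p' (of_nat k) v"
  shows "p = p'"
proof (rule poly_eqI)
  fix n
  define d where "d = coeff p n - coeff p' n"
  have "poly d (of_nat k) = 0" if "k \<ge> 1" for k :: nat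
  proof -
    have "poly (eval_q (of_nat k) p) = poly (eval_q (of_nat k) p')"
      using assms[OF that] by (auto simp: eval_qnu_def eval_q_def fun_eq_iff)
    then have "eval_q (of_nat k) p = eval_q (of_nat k) p'" by (simp add: poly_eq_poly_eq_iff)
    then have "coeff (eval_q (of_nat k) p) n = coeff (eval_q (of_nat k) p') n" by simp
    then show ?thesis by (simp add: eval_q_def coeff_map_poly d_def)
  qed
  then have roots: "(of_nat :: nat \<Rightarrow> rat) ` {1..} \<subseteq> {x. poly d x = 0}" by auto
  have "infinite ((of_nat :: nat \<Rightarrow> rat) ` {1..})"
  proof
    assume "finite ((of_nat :: nat \<Rightarrow> rat) ` {1..})"
    then have "finite {1::nat..}" by (rule finite_imageD) (auto simp: inj_on_def)
    then show False using infinite_Ici[of "1::nat"] by blast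
  qed
  then have "d = 0" using roots poly_roots_finite[of d] finite_subset by blast
  then show "coeff p n = coeff p' n" by (simp add: d_def)
qed

lemma potts_poly_eqI:
  assumes "\<And>k v. k \<ge> 1 \<Longrightarrow> eval_qnu p (of_nat k) v = potts_eval V E ends k v"
  shows "potts_poly V E ends = p"
  unfolding potts_poly_def
proof (rule the_equality)
  fix p' assume p': "\<forall>k::nat. k \<ge> 1 \<longrightarrow> (\<forall>v. eval_qnu p' (of_nat k) v = potts_eval V E ends k v)"
  show "p' = p" by (rule eval_qnu_unique) (simp add: p' assms)
qed (simp add: assms)

definition cset :: "'v set \<Rightarrow> ('v \<times> 'v) set \<Rightarrow> nat \<Rightarrow> ('v \<Rightarrow> nat) set" where
  "cset V A k = {c \<in> V \<rightarrow>\<^sub>E {1..k}. \<forall>(u, w) \<in> A. c u = c w}"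

(* Contracting the pair (u,w): colourings constant along (u,w) and A correspond to
   colourings of V - {w} constant along A with w renamed to u. *)
lemma cset_contract:
  assumes V: "u \<in> V" "w \<in> V" "u \<noteq> w" and A: "A \<subseteq> V \<times> V"
  defines "f \<equiv> id(w := u)"
  shows "card (cset V (insert (u, w) A) k) = card (cset (V - {w}) ((\<lambda>(a, b). (f a, f b)) ` A) k)"
proof -
  let ?S = "cset V (insert (u, w) A) k" and ?S' = "cset (V - {w}) ((\<lambda>(a, b). (f a, f b)) ` A) k"
  define g where "g c = restrict c (V - {w})" for c :: "'a \<Rightarrow> nat"
  define h where "h c' = c'(w := c' u)" for c' :: "'a \<Rightarrow> nat"
  have fV: "a \<in> V \<Longrightarrow> f a \<in> V - {w}" for a using V by (auto simp: f_def)
  have cf: "c u = c w \<Longrightarrow> c (f a) = c a" for c :: "'a \<Rightarrow> nat" and a by (auto simp: f_def)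
  have "bij_betw g ?S ?S'"
  proof (rule bij_betw_byWitness[where f' = h])
    show "\<forall>c\<in>?S. h (g c) = c"
      using V by (auto simp: cset_def PiE_iff h_def g_def extensional_def fun_eq_iff)
    show "\<forall>c'\<in>?S'. g (h c') = c'"
      by (auto simp: cset_def PiE_iff h_def g_def extensional_def fun_eq_iff)
    show "g ` ?S \<subseteq> ?S'"
    proof clarify
      fix c assume c: "c \<in> ?S"
      then have cuw: "c u = c w" and cA: "\<forall>(a, b) \<in> A. c a = c b" and cV: "c \<in> V \<rightarrow>\<^sub>E {1..k}"
        by (auto simp: cset_def)
      have "g c \<in> (V - {w}) \<rightarrow>\<^sub>E {1..k}" using cV by (auto simp: g_def)
      moreover have "g c (f a) = g c (f b)" if ab: "(a, b) \<in> A" for a b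
      proof -
        have "a \<in> V" "b \<in> V" using A ab by auto
        then have "g c (f a) = c a" "g c (f b) = c b" using fV cf[OF cuw] by (auto simp: g_def)
        then show ?thesis using cA ab by auto
      qed
      ultimately show "g c \<in> ?S'" by (auto simp: cset_def)
    qed
    show "h ` ?S' \<subseteq> ?S"
    proof clarify
      fix c' assume c': "c' \<in> ?S'"
      then have cA: "\<forall>(a, b) \<in> (\<lambda>(a, b). (f a, f b)) ` A. c' a = c' b"
        and cV: "c' \<in> (V - {w}) \<rightarrow>\<^sub>E {1..k}" by (auto simp: cset_def)
      have "h c' \<in> V \<rightarrow>\<^sub>E {1..k}" using cV V by (auto simp: h_def PiE_iff extensional_def)
      moreover have hf: "h c' a = c' (f a)" if "a \<in> V" for a by (auto simp: h_def f_def)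
      moreover have "h c' a = h c' b" if ab: "(a, b) \<in> A" for a b
      proof -
        have "a \<in> V" "b \<in> V" using A ab by auto
        moreover have "c' (f a) = c' (f b)" using cA ab by auto
        ultimately show ?thesis using hf by simp
      qed
      moreover have "h c' u = h c' w" using V by (simp add: h_def)
      ultimately show "h c' \<in> ?S" by (auto simp: cset_def)
    qed
  qed
  then show ?thesis by (rule bij_betw_same_card)
qed

lemma card_cset_power:
  assumes "finite A" "finite V" "V \<noteq> {}" "A \<subseteq> V \<times> V"
  shows "\<exists>m\<ge>1. \<forall>k. card (cset V A k) = k ^ m"
  using assms
proof (induction "card A" arbitrary: A V rule: less_induct)
  case less
  show ?case
  proof (cases "A = {}")
    case True
    then have "card (cset V A k) = k ^ card V" for k using less.prems by (simp add: cset_def card_PiE)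
    moreover have "card V \<ge> 1" using less.prems by (simp add: Suc_le_eq card_gt_0_iff)
    ultimately show ?thesis by blast
  next
    case False
    then obtain u w where uw: "(u, w) \<in> A" by auto
    define A0 where "A0 = A - {(u, w)}"
    have A: "A = insert (u, w) A0" and A0V: "A0 \<subseteq> V \<times> V" and uwV: "u \<in> V" "w \<in> V"
      using uw less.prems by (auto simp: A0_def)
    have less_A0: "card A0 < card A" using uw less.prems(1) A0_def by (metis card_Diff1_less)
    show ?thesis
    proof (cases "u = w")
      case True
      then have "cset V A k = cset V A0 k" for k using A by (auto simp: cset_def)
      moreover obtain m where "m \<ge> 1" "\<forall>k. card (cset V A0 k) = k ^ m"
        using less.hyps[OF less_A0] less.prems A0V A0_def by blast
      ultimately show ?thesis by auto
    next
      case False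
      define f where "f = id(w := u)"
      define A' where "A' = (\<lambda>(a, b). (f a, f b)) ` A0"
      have "card A' \<le> card A0" unfolding A'_def using less.prems(1) A0_def by (simp add: card_image_le)
      then have less_A': "card A' < card A" using less_A0 by simp
      have A'V: "A' \<subseteq> (V - {w}) \<times> (V - {w})"
        using A0V uwV False by (auto simp: A'_def f_def split: if_splits)
      obtain m where "m \<ge> 1" "\<forall>k. card (cset (V - {w}) A' k) = k ^ m"
        using less.hyps[OF less_A' _ _ _ A'V] less.prems uwV False A'_def A0_def by blast
      moreover have "card (cset V A k) = card (cset (V - {w}) A' k)" for k
        unfolding A A'_def f_def by (rule cset_contract[OF uwV False A0V])
      ultimately show ?thesis by auto
    qed
  qed
qed

lemma power_card_subset_expansion:
  fixes v :: "'a::comm_ring_1"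
  assumes "finite E"
  shows "v ^ card {e \<in> E. P e} = (\<Sum>B\<in>Pow E. if \<forall>e\<in>B. P e then (v - 1) ^ card B else 0)"
proof -
  have "v ^ card {e \<in> E. P e} = (\<Prod>e\<in>E. if P e then v else 1)"
    using prod.inter_filter[OF assms, of "\<lambda>_. v" P] by simp
  also have "\<dots> = (\<Prod>e\<in>E. (if P e then v - 1 else 0) + 1)" by (rule prod.cong) auto
  also have "\<dots> = (\<Sum>B\<in>Pow E. (\<Prod>e\<in>B. if P e then v - 1 else 0))"
    using prod_add[OF assms, of "\<lambda>e. if P e then v - 1 else 0" "\<lambda>_. 1"] by simp
  also have "\<dots> = (\<Sum>B\<in>Pow E. if \<forall>e\<in>B. P e then (v - 1) ^ card B else 0)"
  proof (rule sum.cong)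
    fix B assume "B \<in> Pow E"
    then have "finite B" using assms finite_subset by auto
    then show "(\<Prod>e\<in>B. if P e then v - 1 else 0) = (if \<forall>e\<in>B. P e then (v - 1) ^ card B else 0)"
      by (auto intro!: prod_zero)
  qed simp
  finally show ?thesis .
qed

lemma potts_eval_FK:
  fixes V :: "'v set" and E :: "'e set" and ends :: "'e \<Rightarrow> 'v \<times> 'v"
  assumes "finite E" "finite V"
  shows "potts_eval V E ends k v =
           (\<Sum>B\<in>Pow E. (v - 1) ^ card B * of_nat (card (cset V (ends ` B) k)))"
proof -
  define C where "C = V \<rightarrow>\<^sub>E {1..k}"
  define P where "P c e \<longleftrightarrow> c (fst (ends e)) = c (snd (ends e))" for c :: "'v \<Rightarrow> nat" and e
  have "finite C" unfolding C_def using assms(2) by (simp add: finite_PiE)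
  have "potts_eval V E ends k v = (\<Sum>c\<in>C. \<Sum>B\<in>Pow E. if \<forall>e\<in>B. P c e then (v - 1) ^ card B else 0)"
    by (simp add: potts_eval_def C_def P_def power_card_subset_expansion[OF assms(1)])
  also have "\<dots> = (\<Sum>B\<in>Pow E. \<Sum>c\<in>{c \<in> C. \<forall>e\<in>B. P c e}. (v - 1) ^ card B)"
    by (subst sum.swap) (simp only: sum.inter_filter[OF \<open>finite C\<close>])
  also have "\<dots> = (\<Sum>B\<in>Pow E. (v - 1) ^ card B * of_nat (card (cset V (ends ` B) k)))"
  proof (rule sum.cong)
    fix B
    have "{c \<in> C. \<forall>e\<in>B. P c e} = cset V (ends ` B) k"
      by (auto simp: cset_def C_def P_def split: prod.splits)
    then show "(\<Sum>c\<in>{c \<in> C. \<forall>e\<in>B. P c e}. (v - 1) ^ card B) =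
               (v - 1) ^ card B * of_nat (card (cset V (ends ` B) k))" by simp
  qed simp
  finally show ?thesis .
qed

(* Consequently the Potts polynomial of a nonempty finite graph is q times a polynomial,
   namely q * sum_B (nu - 1)^|B| q^(m_B - 1) with q^(m_B) the number of colourings above. *)
lemma potts_poly_dvd_q:
  fixes V :: "'v set" and E :: "'e set" and ends :: "'e \<Rightarrow> 'v \<times> 'v"
  assumes fV: "finite V" and nV: "V \<noteq> {}" and fE: "finite E"
    and ends: "\<And>e. e \<in> E \<Longrightarrow> fst (ends e) \<in> V \<and> snd (ends e) \<in> V"
  shows "\<exists>r. potts_poly V E ends = [:[:0,1:]:] * r"
proof -
  have choice: "\<forall>B\<in>Pow E. \<exists>m\<ge>1. \<forall>k. card (cset V (ends ` B) k) = k ^ m"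
  proof
    fix B assume B: "B \<in> Pow E"
    show "\<exists>m\<ge>1. \<forall>k. card (cset V (ends ` B) k) = k ^ m"
    proof (rule card_cset_power)
      show "finite (ends ` B)" using B fE finite_subset by auto
      show "ends ` B \<subseteq> V \<times> V"
        unfolding image_subset_iff mem_Times_iff using B ends by blast
    qed (use fV nV in auto)
  qed
  then obtain m where m: "\<forall>B\<in>Pow E. m B \<ge> 1 \<and> (\<forall>k. card (cset V (ends ` B) k) = k ^ m B)"
    using bchoice[OF choice] by blast
  define r :: "rat poly poly" where
    "r = (\<Sum>B\<in>Pow E. [:[:-1:], [:1:]:] ^ card B * [:[:0,1:] ^ (m B - 1):])"
  have "eval_qnu ([:[:0,1:]:] * r) (of_nat k) v = potts_eval V E ends k v" for k v
  proof -
    have "eval_qnu ([:[:0,1:]:] * r) (of_nat k) v =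
            (\<Sum>B\<in>Pow E. of_nat k * of_nat k ^ (m B - 1) * (v - 1) ^ card B)"
      by (simp add: eval_qnu_def eval_q_def[symmetric] r_def eval_q_mult eval_q_sum eval_q_power
                    eval_q_pCons eval_q_smult eval_q_0 poly_sum poly_power sum_distrib_left mult.assoc)
    also have "\<dots> = (\<Sum>B\<in>Pow E. (v - 1) ^ card B * of_nat (card (cset V (ends ` B) k)))"
    proof (rule sum.cong)
      fix B assume "B \<in> Pow E"
      with m have "card (cset V (ends ` B) k) = k ^ m B" "m B \<ge> 1" by auto
      then have "card (cset V (ends ` B) k) = k * k ^ (m B - 1)" by (cases "m B") auto
      then show "of_nat k * of_nat k ^ (m B - 1) * (v - 1) ^ card B =
                 (v - 1) ^ card B * of_nat (card (cset V (ends ` B) k))" by simp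
    qed simp
    finally show ?thesis using potts_eval_FK[OF fE fV] by simp
  qed
  then show ?thesis by (intro exI[of _ r] potts_poly_eqI) auto
qed

section \<open>The coefficients of Q lie in Q(nu)[q,s,1/s]\<close>

lemma map_potts_dvd_q:
  assumes "is_quasi_tri n \<sigma> \<alpha>" "n \<ge> 1"
  shows "\<exists>r. map_potts n \<sigma> \<alpha> = [:[:0,1:]:] * r"
  unfolding map_potts_def
proof (rule potts_poly_dvd_q)
  have \<alpha>: "\<alpha> permutes darts n" using assms(1) by (simp add: is_quasi_tri_def is_planar_map_def)
  have "0 \<in> darts n" using assms(2) by (simp add: darts_def)
  then show "map_vertices n \<sigma> \<noteq> {}" by (auto simp: map_vertices_def)
  fix e assume "e \<in> {d \<in> darts n. d < \<alpha> d}"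
  then have "e \<in> darts n" "\<alpha> e \<in> darts n" using \<alpha> by (auto simp: permutes_in_image)
  then show "fst (cyc \<sigma> e, cyc \<sigma> (\<alpha> e)) \<in> map_vertices n \<sigma> \<and> snd (cyc \<sigma> e, cyc \<sigma> (\<alpha> e)) \<in> map_vertices n \<sigma>"
    by (simp add: map_vertices_def)
qed (simp_all add: map_vertices_def darts_def)

(* The weight of a single quasi-triangulation: the factor q of its Potts polynomial
   cancels the 1/q, and the remaining factors 1/(2n-1)!, 2^k are rational. *)
lemma R_map_weight:
  assumes "is_quasi_tri n \<sigma> \<alpha>" "n \<ge> 1"
  shows "R (1 / (of_nat (fact (2*n - 1)) * varq) * 2 ^ k * Fract [:map_potts n \<sigma> \<alpha>:] 1)"
proof -
  obtain r where r: "map_potts n \<sigma> \<alpha> = [:[:0,1:]:] * r" using map_potts_dvd_q[OF assms] by blast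
  have "Fract [:map_potts n \<sigma> \<alpha>:] 1 = varq * Fract [:r:] 1"
    unfolding r varq_def by (simp add: mult_ac)
  then have "1 / (of_nat (fact (2*n - 1)) * varq) * 2 ^ k * Fract [:map_potts n \<sigma> \<alpha>:] 1 =
             (1 / of_nat (fact (2*n - 1))) * (of_nat 2) ^ k * Fract [:r:] 1"
    using varq_nz by (simp add: field_simps)
  then show ?thesis by (simp only:) (intro R_mult R_power R_of_nat R_inv_of_nat R_Fract)
qed

lemma R_Q_coeff: "R (coeff (coeff (Q_coeff n) j) i)"
proof (cases "n = 0")
  case True
  then show ?thesis by (cases j; cases i) (simp_all add: Q_coeff_def R_0 R_1)
next
  case False
  show ?thesis
    unfolding Q_coeff_def if_not_P[OF False] coeff_sum
    using R_map_weight False by (intro R_sum) (auto simp: coeff_monom R_0)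
qed

lemma R_Q0y: "R (coeff (Q0y $ n) k)"
  by (simp add: Q0y_def coeff_map_poly poly_0_coeff_0 Qser_def R_Q_coeff)

lemma R_Q1x: "R (coeff (Q1x $ n) k)"
  by (simp add: Q1x_def Qser_def R_Q_coeff)

section \<open>Triangular equations for power series\<close>

definition agree :: "nat \<Rightarrow> 'a fps \<Rightarrow> 'a fps \<Rightarrow> bool" where
  "agree n A B \<longleftrightarrow> (\<forall>i\<le>n. A $ i = B $ i)"

lemma agree_refl [simp]: "agree n A A" by (simp add: agree_def)

lemma agree_add: "agree n A B \<Longrightarrow> agree n C D \<Longrightarrow> agree n (A + C) (B + D)"
  by (simp add: agree_def)

lemma agree_diff: "agree n A B \<Longrightarrow> agree n C D \<Longrightarrow> agree n (A - C) (B - (D :: 'a::ab_group_add fps))"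
  by (simp add: agree_def)

lemma agree_mult:
  fixes A B C D :: "'a::comm_ring_1 fps"
  shows "agree n A B \<Longrightarrow> agree n C D \<Longrightarrow> agree n (A * C) (B * D)"
  unfolding agree_def fps_mult_nth by (auto intro!: sum.cong)

lemma agree_power:
  fixes A B :: "'a::comm_ring_1 fps"
  shows "agree n A B \<Longrightarrow> agree n (A ^ k) (B ^ k)"
  by (induction k) (auto intro: agree_mult)

lemma agree_poly:
  fixes A B :: "'a::comm_ring_1 fps"
  shows "agree n A B \<Longrightarrow> agree n (poly (map_poly fps_const p) A) (poly (map_poly fps_const p) B)"
  by (induction p) (auto simp: map_poly_pCons intro!: agree_add agree_mult)

lemma agree_psubst:
  fixes Y Z :: "'a::comm_ring_1 fps"
  assumes "agree n Y Z"
  shows "agree n (psubst P Y) (psubst P Z)"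
  using agree_poly[OF assms, of "P $ _"]
  unfolding agree_def psubst_def fps_X_power_mult_nth by (auto intro!: sum.cong)

lemma agree_X_mult:
  fixes A B :: "'a::comm_ring_1 fps"
  shows "1 \<le> m \<Longrightarrow> agree (m - 1) A B \<Longrightarrow> (fps_X * A) $ m = (fps_X * B) $ m"
  by (simp add: agree_def fps_X_mult_nth)

lemma fps_mult_nth_low_order:
  fixes W V :: "'a::comm_ring_1 fps"
  assumes "\<And>i. i < m \<Longrightarrow> W $ i = 0"
  shows "(W * V) $ m = W $ m * V $ 0"
proof -
  have "(W * V) $ m = (\<Sum>i=0..m. W $ i * V $ (m - i))" by (rule fps_mult_nth)
  also have "\<dots> = (\<Sum>i\<in>{m}. W $ i * V $ (m - i))"
    by (rule sum.mono_neutral_right) (auto simp: assms)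
  finally show ?thesis by simp
qed

(* A map G on power series defines a triangular system when [t^n] G(Y) depends only on
   Y0,...,Yn and, for m >= 1, is affine in Ym with a slope depending only on Y0.  Such an
   equation G(Y) = 0 has exactly one solution over each simple root of its constant term
   (Hensel's lemma), and the solution lies in any subring containing the data. *)
locale triangular_system =
  fixes G :: "'a::field fps \<Rightarrow> 'a fps" and slope :: "'a \<Rightarrow> 'a"
  assumes causal: "agree n Y Z \<Longrightarrow> agree n (G Y) (G Z)"
    and affine: "1 \<le> m \<Longrightarrow> (\<And>i. i < m \<Longrightarrow> Y $ i = Z $ i) \<Longrightarrow>
                 G Y $ m - G Z $ m = (Y $ m - Z $ m) * slope (Y $ 0)"
begin

lemma root_unique:
  assumes "G Y = 0" "G Z = 0" "Y $ 0 = Z $ 0" "slope (Y $ 0) \<noteq> 0"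
  shows "Y = Z"
proof -
  have "Y $ i = Z $ i" for i
  proof (induction i rule: less_induct)
    case (less i)
    show ?case
    proof (cases "i = 0")
      case False
      then have "G Y $ i - G Z $ i = (Y $ i - Z $ i) * slope (Y $ 0)"
        using affine[of i Y Z] less by simp
      then show ?thesis using assms by simp
    qed (use assms(3) in simp)
  qed
  then show ?thesis by (simp add: fps_eq_iff)
qed

context
  fixes c :: 'a
  assumes root: "G (fps_const c) $ 0 = 0" and slope_nz: "slope c \<noteq> 0"
begin

(* Newton-type approximations: approx m solves the equation up to order m. *)
fun approx :: "nat \<Rightarrow> 'a fps" where
  "approx 0 = fps_const c"
| "approx (Suc m) = approx m + fps_const (- (G (approx m) $ Suc m) / slope c) * fps_X ^ Suc m"

lemma approx_high: "m < i \<Longrightarrow> approx m $ i = 0"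
  by (induction m arbitrary: i) (simp_all add: fps_X_power_mult_right_nth)

lemma approx_Suc_nth:
  "approx (Suc m) $ i = (if i = Suc m then - (G (approx m) $ Suc m) / slope c else approx m $ i)"
  using approx_high[of m "Suc m"] by (auto simp: fps_X_power_mult_right_nth)

declare approx.simps(2) [simp del]

lemma approx_0: "approx m $ 0 = c"
  by (induction m) (simp_all add: approx_Suc_nth)

lemma approx_stable: "j \<le> i \<Longrightarrow> approx i $ j = approx j $ j"
  by (induction i) (auto simp: approx_Suc_nth le_Suc_eq)

lemma approx_root: "i \<le> m \<Longrightarrow> G (approx m) $ i = 0"
proof (induction m arbitrary: i)
  case 0
  then show ?case using root by simp
next
  case (Suc m)
  show ?case
  proof (cases "i = Suc m")
    case True
    have "G (approx (Suc m)) $ Suc m - (G (approx m) $ Suc m) =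
          (approx (Suc m) $ Suc m - approx m $ Suc m) * slope (approx (Suc m) $ 0)"
      by (rule affine) (auto simp: approx_Suc_nth)
    also have "\<dots> = - (G (approx m) $ Suc m)"
      using slope_nz by (simp add: approx_Suc_nth approx_high approx_0)
    finally show ?thesis using True by simp
  next
    case False
    then have "i \<le> m" using Suc.prems by simp
    have "agree m (approx (Suc m)) (approx m)" by (simp add: agree_def approx_Suc_nth)
    then have "G (approx (Suc m)) $ i = G (approx m) $ i"
      using causal \<open>i \<le> m\<close> unfolding agree_def by blast
    then show ?thesis using Suc.IH \<open>i \<le> m\<close> by simp
  qed
qed

definition root_series :: "'a fps" where "root_series = Abs_fps (\<lambda>i. approx i $ i)"

lemma root_series_root: "G root_series = 0"
proof -
  have "agree i root_series (approx i)" for i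
    unfolding agree_def root_series_def by clarsimp (rule approx_stable[symmetric])
  then have "G root_series $ i = G (approx i) $ i" for i
    using causal unfolding agree_def by blast
  then show ?thesis using approx_root by (simp add: fps_eq_iff)
qed

lemma root_series_0: "root_series $ 0 = c"
  by (simp add: root_series_def approx_0)

lemma root_series_closed:
  assumes "P 0" "P c" "\<And>a. P a \<Longrightarrow> P (- a / slope c)"
    and "\<And>Y. \<forall>n. P (Y $ n) \<Longrightarrow> \<forall>n. P (G Y $ n)"
  shows "P (root_series $ n)"
proof -
  have "\<forall>i. P (approx m $ i)" for m
  proof (induction m)
    case (Suc m)
    then have "P (- (G (approx m) $ Suc m) / slope c)" using assms(3,4) by blast
    then show ?case using Suc.IH by (simp add: approx_Suc_nth)
  qed (simp add: assms(1,2))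
  then show ?thesis by (simp add: root_series_def)
qed

end

lemma root_exists:
  assumes "G (fps_const c) $ 0 = 0" "slope c \<noteq> 0"
    and "P 0" "P c" "\<And>a. P a \<Longrightarrow> P (- a / slope c)"
    and "\<And>Y. \<forall>n. P (Y $ n) \<Longrightarrow> \<forall>n. P (G Y $ n)"
  shows "\<exists>Y. G Y = 0 \<and> Y $ 0 = c \<and> (\<forall>n. P (Y $ n))"
  using root_series_root[OF assms(1,2)] root_series_0[OF assms(1,2)]
    root_series_closed[OF assms] by blast

end

section \<open>Clearing the denominators of the kernel\<close>

definition x_ts :: "F fps" where "x_ts = fps_const vars * fps_X"
definition den :: "F fps" where "den = 1 - x_ts * fps_const varnu * fps_X"
definition Q1_ts :: "F fps" where "Q1_ts = psubst Q1x x_ts"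

(* The constant a with [t^0] G(Y) = Y0 - a Y0^2. *)
definition a_nu :: F where "a_nu = (varnu - 1) / vars"

(* y (1 - x nu t) K(x, y) at x = ts, as a power series in t. *)
definition G :: "F fps \<Rightarrow> F fps" where
  "G Y = Y * (1 - x_ts * fps_X) * den - fps_X * den - Y^2 * fps_const a_nu
         - fps_X * Y^3 * (fps_const varnu - 1 + fps_const varq - x_ts * fps_const varnu * fps_const varq * fps_X)
             * psubst Q0y Y
         - Y^2 * (fps_const varnu + x_ts * fps_const varnu * fps_X - 1) * den * Q1_ts * fps_const (1 / varnu)"

lemma kernel_times_denominators:
  fixes t S N Qc y P0 P1 :: "'a::field"
  assumes "S \<noteq> 0" "t \<noteq> 0" "N \<noteq> 0" "y \<noteq> 0" "1 - S * t * N * t \<noteq> 0"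
  shows "(1 - S * t * t - t / y - y * t * (N - 1) / ((1 - S * t * N * t) * (S * t))
           - t * y^2 * (N - 1 + Qc - S * t * N * Qc * t) * P0 / (1 - S * t * N * t)
           - y * (N + S * t * N * t - 1) * P1 / N) * y * (1 - S * t * N * t)
       = y * (1 - S * t * t) * (1 - S * t * N * t) - t * (1 - S * t * N * t) - y^2 * ((N - 1) / S)
         - t * y^3 * (N - 1 + Qc - S * t * N * Qc * t) * P0
         - y^2 * (N + S * t * N * t - 1) * (1 - S * t * N * t) * P1 * (1 / N)"
proof -
  define D where "D = 1 - S * t * N * t"
  have "D \<noteq> 0" using assms(5) D_def by simp
  then have "(1 - S * t * t - t / y - y * t * (N - 1) / (D * (S * t))
           - t * y^2 * (N - 1 + Qc - S * t * N * Qc * t) * P0 / D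
           - y * (N + S * t * N * t - 1) * P1 / N) * y * D
       = y * (1 - S * t * t) * D - t * D - y^2 * ((N - 1) / S)
         - t * y^3 * (N - 1 + Qc - S * t * N * Qc * t) * P0
         - y^2 * (N + S * t * N * t - 1) * D * P1 * (1 / N)"
    using assms(1-4) by (simp add: field_simps power2_eq_square power3_eq_cube)
  then show ?thesis unfolding D_def .
qed

lemma den_nz: "den \<noteq> 0"
proof
  assume "den = 0"
  then have "den $ 0 = 0" by simp
  then show False by (simp add: den_def x_ts_def)
qed

lemma K_ts_cleared:
  assumes "Y \<noteq> 0"
  shows "K_ts Y * fps_to_fls Y * fps_to_fls den = fps_to_fls (G Y)"
proof -
  have S: "fls_const vars \<noteq> (0::F fls)" using vars_nz by simp
  have N: "fls_const varnu \<noteq> (0::F fls)" using varnu_nz by simp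
  have y: "fps_to_fls Y \<noteq> 0" using assms by simp
  have den: "fps_to_fls den = 1 - fls_const vars * fls_X * fls_const varnu * fls_X"
    by (simp add: den_def x_ts_def fls_times_fps_to_fls)
  have D: "1 - fls_const vars * fls_X * fls_const varnu * fls_X \<noteq> (0::F fls)"
    using den_nz den by (metis fps_to_fls_eq_0_iff)
  have inv_nu: "fls_const (1 / varnu) = 1 / fls_const varnu"
    by (metis fls_const_divide_const fls_const_1)
  have a_nu: "fls_const a_nu = (fls_const varnu - 1) / fls_const vars"
    using fls_minus_const[of varnu 1] by (simp add: a_nu_def fls_const_divide_const[symmetric])
  show ?thesis
    unfolding K_ts_def Let_def den
    by (subst kernel_times_denominators[OF S fls_X_nonzero N y D])
       (simp add: G_def den_def x_ts_def Q1_ts_def fls_times_fps_to_fls fps_to_fls_power inv_nu a_nu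
             del: fls_const_mult_const)
qed

lemma K_ts_0: "K_ts 0 \<noteq> 0"
proof
  assume "K_ts 0 = 0"
  then have "fls_nth (K_ts 0) 0 = 0" by simp
  then show False by (simp add: K_ts_def Let_def fls_times_nth power2_eq_square)
qed

lemma K_ts_eq_0_iff: "K_ts Y = 0 \<longleftrightarrow> Y \<noteq> 0 \<and> G Y = 0"
proof (cases "Y = 0")
  case False
  have "fps_to_fls Y \<noteq> 0" "fps_to_fls den \<noteq> 0" using False den_nz by simp_all
  then show ?thesis using K_ts_cleared[OF False] False by (metis fps_to_fls_eq_0_iff mult_eq_0_iff)
qed (simp add: K_ts_0)

lemma Q1_ts_0: "Q1_ts $ 0 = 0"
  by (simp add: Q1_ts_def psubst_def Q1x_def Qser_def Q_coeff_def)

lemma G_0: "G Y $ 0 = Y $ 0 - (Y $ 0)^2 * a_nu"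
  by (simp add: G_def den_def x_ts_def Q1_ts_0 fps_nth_power_0)

lemma G_zero_nz: "G 0 \<noteq> 0"
proof
  assume "G 0 = 0"
  then have "G 0 $ 1 = 0" by simp
  then show False by (simp add: G_def den_def x_ts_def)
qed

lemma G_causal: "agree n Y Z \<Longrightarrow> agree n (G Y) (G Z)"
  unfolding G_def by (intro agree_diff agree_mult agree_power agree_psubst agree_refl) auto

(* [t^m] G(Y) is affine in Y_m with slope 1 - 2 a Y_0: the terms of G that are nonlinear in
   Y, apart from the a Y^2 term, carry a factor t or a factor Q_1(ts) = O(t). *)
lemma G_affine:
  assumes m: "1 \<le> m" and agree_below: "\<And>i. i < m \<Longrightarrow> Y $ i = Z $ i"
  shows "G Y $ m - G Z $ m = (Y $ m - Z $ m) * (1 - 2 * Y $ 0 * a_nu)"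
proof -
  define T where "T Y = Y^3 * (fps_const varnu - 1 + fps_const varq
                      - x_ts * fps_const varnu * fps_const varq * fps_X) * psubst Q0y Y" for Y
  define C where "C = (fps_const varnu + x_ts * fps_const varnu * fps_X - 1) * den * Q1_ts
                      * fps_const (1 / varnu)"
  have diff: "G Y - G Z = (Y - Z) * ((1 - x_ts * fps_X) * den - (Y + Z) * fps_const a_nu - (Y + Z) * C)
                          - (fps_X * T Y - fps_X * T Z)"
    unfolding G_def T_def C_def by (simp add: algebra_simps power2_eq_square)
  have "agree (m - 1) Y Z" using agree_below m by (auto simp: agree_def)
  then have "agree (m - 1) (T Y) (T Z)"
    unfolding T_def by (intro agree_mult agree_power agree_psubst agree_refl)
  then have T: "(fps_X * T Y) $ m = (fps_X * T Z) $ m" by (rule agree_X_mult[OF m])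
  have Z0: "Z $ 0 = Y $ 0" using agree_below[of 0] m by simp
  have "(G Y - G Z) $ m = (Y - Z) $ m *
          ((1 - x_ts * fps_X) * den - (Y + Z) * fps_const a_nu - (Y + Z) * C) $ 0"
    unfolding diff using T fps_mult_nth_low_order[of m "Y - Z"] agree_below by simp
  also have "((1 - x_ts * fps_X) * den - (Y + Z) * fps_const a_nu - (Y + Z) * C) $ 0
             = 1 - 2 * Y $ 0 * a_nu"
    by (simp add: den_def x_ts_def C_def Q1_ts_0 Z0)
  finally show ?thesis by simp
qed

interpretation kernel: triangular_system G "\<lambda>y0. 1 - 2 * y0 * a_nu"
  by unfold_locales (use G_causal G_affine in auto)

lemma R_fps_G: "R_fps Y \<Longrightarrow> R_fps (G Y)"
proof -
  have "R a_nu" unfolding a_nu_def by (rule R_divide[OF R_diff[OF R_varnu R_1] R_inv_vars])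
  then show "R_fps Y \<Longrightarrow> R_fps (G Y)"
    unfolding G_def den_def x_ts_def Q1_ts_def
    by (intro R_fps_add R_fps_diff R_fps_mult R_fps_power R_fps_const R_fps_X R_fps_1 R_fps_psubst
          R_Q0y R_Q1x R_vars R_varnu R_varq R_inv_nu | assumption)+
qed

section \<open>The two roots of the kernel\<close>

lemma a_nu_nz: "a_nu \<noteq> 0"
  using vars_nz varnu_ne1 by (simp add: a_nu_def)

lemma inverse_a_nu: "1 / a_nu = vars / (varnu - 1)"
  by (simp add: a_nu_def)

lemma G_root_constant_term:
  assumes "G Y = 0"
  shows "Y $ 0 = 0 \<or> Y $ 0 = vars / (varnu - 1)"
proof -
  have "Y $ 0 * (1 - Y $ 0 * a_nu) = 0"
    using G_0[of Y] assms by (simp add: algebra_simps power2_eq_square)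
  then have "Y $ 0 = 0 \<or> Y $ 0 = 1 / a_nu" using a_nu_nz by (auto simp: field_simps)
  then show ?thesis by (simp add: inverse_a_nu)
qed

lemma slope_at_roots:
  assumes "c = 0 \<or> c = vars / (varnu - 1)"
  shows "1 - 2 * c * a_nu = 1 \<or> 1 - 2 * c * a_nu = -1"
  using assms a_nu_nz by (auto simp: inverse_a_nu[symmetric])

lemma G_root_exists:
  assumes "c = 0 \<or> c = vars / (varnu - 1)"
  shows "\<exists>Y. G Y = 0 \<and> Y $ 0 = c \<and> (\<forall>n. R (Y $ n))"
proof (rule kernel.root_exists)
  have slope: "1 - 2 * c * a_nu = 1 \<or> 1 - 2 * c * a_nu = -1" using slope_at_roots[OF assms] .
  show "G (fps_const c) $ 0 = 0"
    using assms a_nu_nz by (auto simp: G_0 power2_eq_square inverse_a_nu[symmetric])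
  show "1 - 2 * c * a_nu \<noteq> 0" using slope by auto
  show "R c" using assms R_0 R_divide[OF R_vars R_inv_nu_minus_1] by auto
  show "R (- a / (1 - 2 * c * a_nu))" if Ra: "R a" for a
    using slope
  proof
    assume "1 - 2 * c * a_nu = 1"
    then show ?thesis unfolding \<open>1 - 2 * c * a_nu = 1\<close> using R_uminus[OF Ra] by simp
  next
    assume "1 - 2 * c * a_nu = -1"
    then show ?thesis unfolding \<open>1 - 2 * c * a_nu = -1\<close> using Ra by simp
  qed
  show "\<forall>n. R (G Y $ n)" if "\<forall>n. R (Y $ n)" for Y
    using R_fps_G[of Y] that by (simp add: R_fps_def)
qed (rule R_0)

theorem lemma7p1:
  shows "\<exists>Y1 Y2 :: F fps.
           {Y :: F fps. K_ts Y = 0} = {Y1, Y2} \<and> Y1 \<noteq> Y2 \<and>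
           fps_nth Y1 0 = 0 \<and> fps_nth Y2 0 = vars / (varnu - 1) \<and>
           (\<forall>n. in_Qnu_q_s_sinv (fps_nth Y1 n)) \<and> (\<forall>n. in_Qnu_q_s_sinv (fps_nth Y2 n))"
proof -
  obtain Y1 where Y1: "G Y1 = 0" "Y1 $ 0 = 0" "\<forall>n. R (Y1 $ n)" using G_root_exists by blast
  obtain Y2 where Y2: "G Y2 = 0" "Y2 $ 0 = vars / (varnu - 1)" "\<forall>n. R (Y2 $ n)"
    using G_root_exists by blast
  have Y2_0_nz: "Y2 $ 0 \<noteq> 0" using Y2(2) a_nu_nz inverse_a_nu by force
  have nz: "Y1 \<noteq> 0" "Y2 \<noteq> 0" using Y1(1) Y2_0_nz G_zero_nz by auto
  have "Y \<in> {Y1, Y2}" if Y: "G Y = 0" for Y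
  proof -
    have slope: "1 - 2 * Y $ 0 * a_nu \<noteq> 0"
      using slope_at_roots[OF G_root_constant_term[OF Y]] by auto
    show ?thesis
      using G_root_constant_term[OF Y] kernel.root_unique[OF Y Y1(1) _ slope]
        kernel.root_unique[OF Y Y2(1) _ slope] Y1(2) Y2(2) by auto
  qed
  then have "{Y. K_ts Y = 0} = {Y1, Y2}"
    using nz Y1(1) Y2(1) by (auto simp: K_ts_eq_0_iff)
  moreover have "Y1 \<noteq> Y2" using Y1(2) Y2_0_nz by auto
  ultimately show ?thesis using Y1 Y2 by blast
qed

end
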